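(* Let $m\ge2$ be an integer, let $B\subseteq m\mathbb Z$ be an infinite set, and let $F\subseteq\mathbb Z$ be a finite nonempty set all of whose elements are congruent to $\tilde f$ modulo $m$, where $\tilde f\in\{1,\dots,m-1\}$. Suppose there exist an integer $n\ge1$ and sets $S_1,\dots,S_n$ with $S_1\cup\cdots\cup S_n=m\mathbb N\cup B$ such that for each $i$ there is $W_i\subseteq\mathbb Z$ with $m\mathbb Z\setminus S_i=F+W_i$. If \[m\ge \tilde f+2\tilde f\left\lfloor\frac{n+1}{\tilde f}\right\rfloor+\operatorname{mod}_{\tilde f}(n+1),\] then $C=m\mathbb N\cup B\cup F$ arises as a minimal additive complement in $\mathbb Z$.
   Context: $\mathbb N=\{0,1,2,\dots\}$, $m\mathbb N=\{mk:k\in\mathbb N\}$; $\operatorname{mod}_{a}n$ denotes the remainder of $n$ upon division by $a$. For $C,W\subseteq\mathbb Z$, $C+W=\{c+w:c\in C,w\in W\}$. $C$ is a minimal additive complement (MAC) to $W$ if $C+W=\mathbb Z$ and no proper subset $C'\subsetneq C$ satisfies $C'+W=\mathbb Z$. $C$ arises as a MAC if there exists $W\subseteq\mathbb Z$ to which $C$ is a MAC. *)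

theory Defs
  imports Main
begin

definition sumset :: "int set \<Rightarrow> int set \<Rightarrow> int set" (infixl "\<oplus>\<^sub>s" 65) where
  "C \<oplus>\<^sub>s W = {c + w | c w. c \<in> C \<and> w \<in> W}"

definition is_MAC :: "int set \<Rightarrow> int set \<Rightarrow> bool" where
  "is_MAC C W \<longleftrightarrow> C \<oplus>\<^sub>s W = UNIV \<and> (\<forall>C'. C' \<subset> C \<longrightarrow> C' \<oplus>\<^sub>s W \<noteq> UNIV)"

definition arises_as_MAC :: "int set \<Rightarrow> bool" where
  "arises_as_MAC C \<longleftrightarrow> (\<exists>W. is_MAC C W)"

definition multN :: "int \<Rightarrow> int set" where
  "multN m = {m * int k | k. True}"

definition multZ :: "int \<Rightarrow> int set" where
  "multZ m = {m * k | k. True}"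

end

theory Submission
  imports Defs
begin

(* Let g be the common residue of F modulo m.  Group the residues modulo m into disjoint pairs
   (p, p + g) with p mod 2g < g; the bound on m makes room for n + 1 pairs, and for n + 2 unless
   it is an equality.  Each set S of a cover of C = mN \<union> B, with mZ - S = F + V, gets a pair of
   its own, and the complement W contains p + g + V in the class of p but only p + g in the class
   of p + g.  Then p + g is an essential witness for every c \<in> S: c + p + g - c' lies in W only
   if c' = c (when c' \<in> C), or only if c \<in> F + V (when c' \<in> F).  One more pair does the same
   for F, using a set Y in the class of -g against which every element of F is essential; all
   other residue classes belong to W entirely.  Covering the class of p needs C + V to contain
   the class of -g, which holds if S misses arbitrarily negative multiples of m.  If some S
   contains all multiples of m below a, every set of the cover is cut at a, which costs one more
   pair; when there is no room for it, that S stays uncut at the pair (0, g), and the class of 0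
   is covered by F + W because the class of -g is left free. *)

section \<open>Residue classes\<close>

lemma mem_sumset: "x \<in> A \<oplus>\<^sub>s B \<longleftrightarrow> (\<exists>a\<in>A. \<exists>b\<in>B. x = a + b)"
  by (auto simp: sumset_def)

lemma mem_multZ [simp]: "x \<in> multZ m \<longleftrightarrow> m dvd x"
  by (auto simp: multZ_def dvd_def)

lemma mem_multN: "0 < m \<Longrightarrow> x \<in> multN m \<longleftrightarrow> m dvd x \<and> 0 \<le> x"
  by (auto simp: multN_def dvd_def zero_le_mult_iff intro: exI[of _ "nat _"])

definition residue_class :: "int \<Rightarrow> int \<Rightarrow> int set" where
  "residue_class m r = {x. m dvd x - r}"

lemma mem_residue_class [simp]: "x \<in> residue_class m r \<longleftrightarrow> m dvd x - r"
  by (simp add: residue_class_def)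

lemma residue_class_add:
  "x \<in> residue_class m r \<Longrightarrow> y \<in> residue_class m s \<Longrightarrow> x + y \<in> residue_class m (r + s)"
  using dvd_add[of m "x - r" "y - s"] by (simp add: algebra_simps)

lemma residue_class_diff:
  "x \<in> residue_class m r \<Longrightarrow> y \<in> residue_class m s \<Longrightarrow> x - y \<in> residue_class m (r - s)"
  using dvd_diff[of m "x - r" "y - s"] by (simp add: algebra_simps)

lemma mod_eq_iff_residue_class:
  "0 \<le> r \<Longrightarrow> r < m \<Longrightarrow> x mod m = r \<longleftrightarrow> x \<in> residue_class m r"
  by (metis mem_residue_class mod_eq_dvd_iff mod_pos_pos_trivial)

lemma residue_class_unbounded_below: "0 < m \<Longrightarrow> \<exists>x\<in>residue_class m r. x \<le> t"
  using dvd_minus_mod[of m "t - r"]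
  by (intro bexI[of _ "t - (t - r) mod m"]) (auto simp: algebra_simps)

lemma residue_class_unbounded_above:
  assumes "0 < m" shows "\<exists>x\<in>residue_class m r. t \<le> x"
proof (intro bexI)
  have "m dvd r - (t + (r - t) mod m)"
    using dvd_minus_mod[of m "r - t"] by (simp add: algebra_simps)
  then show "t + (r - t) mod m \<in> residue_class m r"
    by (simp add: dvd_diff_commute)
qed (use assms in simp)

lemma residue_class_subset_sumset_if_unbounded_below:
  assumes "0 < m" "multN m \<subseteq> C" and V: "\<And>t. \<exists>v\<in>V \<inter> residue_class m r. v \<le> t"
  shows "residue_class m r \<subseteq> C \<oplus>\<^sub>s V"
proof
  fix x assume x: "x \<in> residue_class m r"
  obtain v where v: "v \<in> V" "v \<in> residue_class m r" "v \<le> x" using V by blast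
  have "x - v \<in> multN m"
    using residue_class_diff[OF x v(2)] v(3) assms(1) by (simp add: mem_multN)
  then show "x \<in> C \<oplus>\<^sub>s V"
    using assms(2) v(1) by (force simp: mem_sumset)
qed

lemma residue_class_subset_sumset_if_unbounded_above:
  assumes "{x \<in> multZ m. x \<le> a} \<subseteq> C" and V: "\<And>t. \<exists>v\<in>V \<inter> residue_class m r. t \<le> v"
  shows "residue_class m r \<subseteq> C \<oplus>\<^sub>s V"
proof
  fix x assume x: "x \<in> residue_class m r"
  obtain v where v: "v \<in> V" "v \<in> residue_class m r" "x - a \<le> v" using V by blast
  have "x - v \<in> C"
    using residue_class_diff[OF x v(2)] v(3) assms(1) by auto
  then show "x \<in> C \<oplus>\<^sub>s V"
    using v(1) by (force simp: mem_sumset)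
qed

section \<open>Minimal complements\<close>

lemma arises_as_MACI:
  assumes cover: "\<And>z. \<exists>c\<in>C. \<exists>w\<in>W. z = c + w"
    and essential: "\<And>c. c \<in> C \<Longrightarrow> \<exists>w\<in>W. \<forall>c'\<in>C - {c}. c + w - c' \<notin> W"
  shows "arises_as_MAC C"
  unfolding arises_as_MAC_def is_MAC_def
proof (intro exI conjI allI impI)
  show "C \<oplus>\<^sub>s W = UNIV" using cover by (auto simp: mem_sumset)
next
  fix C' assume "C' \<subset> C"
  then obtain c where c: "c \<in> C" "c \<notin> C'" by blast
  then obtain w where w: "w \<in> W" "\<forall>c'\<in>C - {c}. c + w - c' \<notin> W"
    using essential by blast
  have "c + w \<notin> C' \<oplus>\<^sub>s W"
    using w \<open>C' \<subset> C\<close> c(2) by (force simp: mem_sumset)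
  then show "C' \<oplus>\<^sub>s W \<noteq> UNIV" by blast
qed

lemma finite_set_shift_invariant_imp_zero:
  fixes d :: int
  assumes "finite F" "F \<noteq> {}" "\<And>f. f \<in> F \<Longrightarrow> f + d \<in> F"
  shows "d = 0"
proof -
  have "Max F + d \<in> F" "Min F + d \<in> F"
    using assms by simp_all
  then have "Max F + d \<le> Max F" "Min F \<le> Min F + d"
    using assms(1) by (simp_all only: Max_ge Min_le)
  then show ?thesis by simp
qed

lemma eq_if_multiples_close:
  fixes M a b :: int
  assumes "\<bar>M * a - M * b\<bar> < M"
  shows "a = b"
proof (rule ccontr)
  assume "a \<noteq> b"
  have "0 \<le> M" using assms by linarith
  then have "M * 1 \<le> M * \<bar>a - b\<bar>" using \<open>a \<noteq> b\<close> by (intro mult_left_mono) auto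
  also have "\<dots> = \<bar>M * a - M * b\<bar>"
    using \<open>0 \<le> M\<close> by (simp add: abs_mult right_diff_distrib[symmetric])
  finally show False using assms by simp
qed

(* Y is the class of -g without the points M h - k (h \<noteq> k in F), which makes M f - f an
   essential witness for f.  As M > 4 max |F|, if x - F consisted of such points for a multiple
   x of m, they would all share the same h, so f \<mapsto> k would translate F into itself; then
   k = f, which fails for f = h. *)
lemma essential_complement_in_class:
  fixes F :: "int set"
  assumes m: "0 < m" and F: "finite F" "F \<noteq> {}" "F \<subseteq> residue_class m g"
  obtains Y where "Y \<subseteq> residue_class m (-g)" "multZ m \<subseteq> F \<oplus>\<^sub>s Y" "\<And>t. \<exists>y\<in>Y. y \<le> t"
    "\<And>f. f \<in> F \<Longrightarrow> \<exists>y\<in>Y. \<forall>f'\<in>F - {f}. f + y - f' \<notin> Y"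
proof -
  define A where "A = Max (abs ` F)"
  have A: "\<bar>f\<bar> \<le> A" if "f \<in> F" for f
    using F(1) that by (simp add: A_def)
  define M where "M = m * (4 * A + 1)"
  have "0 \<le> A" using A F(2) by force
  then have "1 * (4 * A + 1) \<le> M" unfolding M_def using m by (intro mult_right_mono) auto
  then have M: "4 * A < M" "0 \<le> M" using \<open>0 \<le> A\<close> by simp_all
  have sep: "h = h'" if "\<bar>M * h - M * h'\<bar> \<le> 4 * A" for h h'
    using that M(1) by (intro eq_if_multiples_close[of M]) linarith
  define D where "D = {M * h - k | h k. h \<in> F \<and> k \<in> F \<and> k \<noteq> h}"
  define Y where "Y = residue_class m (-g) - D"
  show thesis
  proof
    show "Y \<subseteq> residue_class m (-g)" by (auto simp: Y_def)
  next
    show "multZ m \<subseteq> F \<oplus>\<^sub>s Y"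
    proof
      fix x assume x: "x \<in> multZ m"
      show "x \<in> F \<oplus>\<^sub>s Y"
      proof (rule ccontr)
        assume nx: "x \<notin> F \<oplus>\<^sub>s Y"
        have in_D: "x - f \<in> D" if f: "f \<in> F" for f
        proof (rule ccontr)
          assume "x - f \<notin> D"
          moreover have "x - f \<in> residue_class m (-g)"
            using residue_class_diff[of x m 0 f g] x f F(3) by auto
          ultimately show False using nx f by (force simp: Y_def mem_sumset)
        qed
        have "\<forall>f\<in>F. \<exists>h k. h \<in> F \<and> k \<in> F \<and> k \<noteq> h \<and> x - f = M * h - k"
          using in_D unfolding D_def by blast
        then obtain h k where hk: "\<And>f. f \<in> F \<Longrightarrow>
            h f \<in> F \<and> k f \<in> F \<and> k f \<noteq> h f \<and> x - f = M * h f - k f"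
          by metis
        obtain f1 where f1: "f1 \<in> F" using F(2) by blast
        have h_const: "h f = h f1" if "f \<in> F" for f
          using hk[OF that] hk[OF f1] A[OF that] A[OF f1] A[of "k f"] A[of "k f1"]
          by (intro sep) linarith
        have "k f = f + (M * h f1 - x)" if "f \<in> F" for f
          using hk[OF that] h_const[OF that] by simp
        then have "M * h f1 - x = 0"
          using F(1,2) hk by (intro finite_set_shift_invariant_imp_zero[of F]) auto
        then show False
          using hk[of "h f1"] hk[OF f1] h_const[of "h f1"] by auto
      qed
    qed
  next
    fix t
    obtain y where y: "y \<in> residue_class m (-g)" "y \<le> min t (- M * A - A - 1)"
      using residue_class_unbounded_below[OF m] by blast
    have "y \<notin> D"
    proof
      assume "y \<in> D"
      then obtain h k where hk: "y = M * h - k" "h \<in> F" "k \<in> F" unfolding D_def by blast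
      have "M * (- A) \<le> M * h" using A[OF hk(2)] M(2) by (intro mult_left_mono) auto
      then show False using hk y A[OF hk(3)] by linarith
    qed
    then show "\<exists>y\<in>Y. y \<le> t" using y by (auto simp: Y_def)
  next
    fix f assume f: "f \<in> F"
    have "M * f - f \<notin> D"
    proof
      assume "M * f - f \<in> D"
      then obtain h k where hk: "M * f - f = M * h - k" "h \<in> F" "k \<in> F" "k \<noteq> h"
        unfolding D_def by blast
      have "f = h" using hk A[OF f] A[OF hk(3)] M by (intro sep) linarith
      then show False using hk by simp
    qed
    moreover have "M * f - f \<in> residue_class m (-g)"
      using residue_class_diff[of "M * f" m 0 f g] F(3) f by (auto simp: M_def)
    ultimately have "M * f - f \<in> Y" by (simp add: Y_def)
    moreover have "f + (M * f - f) - f' \<notin> Y" if "f' \<in> F - {f}" for f'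
      using that f by (auto simp: Y_def D_def)
    ultimately show "\<exists>y\<in>Y. \<forall>f'\<in>F - {f}. f + y - f' \<notin> Y" by blast
  qed
qed

section \<open>Pairs of residues\<close>

(* slot g k is the k-th integer p \<ge> 0 with p mod 2g < g; the pairs (slot g k, slot g k + g)
   are pairwise disjoint. *)
definition slot :: "int \<Rightarrow> nat \<Rightarrow> int" where
  "slot g k = 2 * g * (int k div g) + int k mod g"

lemma slot_altdef: "slot g k = int k + g * (int k div g)"
  unfolding slot_def using div_mult_mod_eq[of "int k" g] by (simp add: algebra_simps)

lemma slot_nonneg: "0 < g \<Longrightarrow> 0 \<le> slot g k"
  by (simp add: slot_altdef pos_imp_zdiv_nonneg_iff)

lemma slot_strict_mono:
  assumes "0 < g" "j < k" shows "slot g j < slot g k"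
proof -
  have "int j div g \<le> int k div g" using assms by (simp add: zdiv_mono1)
  then have "g * (int j div g) \<le> g * (int k div g)" using assms(1) by simp
  then show ?thesis using assms(2) by (simp add: slot_altdef)
qed

lemma slot_eq_iff: "0 < g \<Longrightarrow> slot g j = slot g k \<longleftrightarrow> j = k"
  by (metis linorder_neqE_nat order_less_irrefl slot_strict_mono)

lemma slot_mod_double:
  assumes "0 < g" shows "slot g k mod (2 * g) = int k mod g"
proof -
  have "0 \<le> int k mod g" "int k mod g < g" using assms by simp_all
  then have "int k mod g < 2 * g" by linarith
  with \<open>0 \<le> int k mod g\<close> show ?thesis
    by (simp add: slot_def mod_pos_pos_trivial add.commute)
qed

lemma slot_ne_shifted_slot:
  assumes "0 < g" shows "slot g j \<noteq> slot g k + g"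
proof
  assume eq: "slot g j = slot g k + g"
  have "slot g k + g = (int k mod g + g) + int k div g * (2 * g)"
    by (simp add: slot_def algebra_simps)
  then have "(slot g k + g) mod (2 * g) = (int k mod g + g) mod (2 * g)"
    by (simp only: mod_mult_self1)
  also have "\<dots> = int k mod g + g"
    using assms pos_mod_bound[OF assms, of "int k"] by (simp add: mod_pos_pos_trivial)
  finally have "(slot g k + g) mod (2 * g) = int k mod g + g" .
  then show False
    using eq slot_mod_double[OF assms, of j] pos_mod_bound[OF assms, of "int j"]
      pos_mod_sign[OF assms, of "int k"] by simp
qed

definition used_residues :: "int \<Rightarrow> nat \<Rightarrow> int set" where
  "used_residues g K = slot g ` {..K} \<union> (\<lambda>k. slot g k + g) ` {..K}"

section \<open>The complement built from a list of chains\<close>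

(* Chain k occupies the pair of residues with index k, and F the pair with index length chains. *)
locale MAC_layout =
  fixes m g :: int and F C Y :: "int set" and chains :: "(int set \<times> int set) list"
  assumes g_pos: "0 < g"
    and slots_fit: "slot g (length chains) + g < m"
    and F_class: "F \<subseteq> residue_class m g" and F_nonempty: "F \<noteq> {}"
    and zero_in_C: "0 \<in> C" and C_multiples: "C \<subseteq> multZ m"
    and chain_subset: "\<And>S V. (S, V) \<in> set chains \<Longrightarrow> S \<subseteq> C"
    and chain_complement: "\<And>S V. (S, V) \<in> set chains \<Longrightarrow> multZ m - S = F \<oplus>\<^sub>s V"
    and chains_cover: "C \<subseteq> (\<Union>(S, V)\<in>set chains. S)"
    and chain_fill: "\<And>k. k < length chains \<Longrightarrow>
      residue_class m (-g) \<subseteq> C \<oplus>\<^sub>s snd (chains ! k)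
      \<or> (slot g k - g) mod m \<notin> used_residues g (length chains)"
    and Y_class: "Y \<subseteq> residue_class m (-g)"
    and Y_complement: "multZ m \<subseteq> F \<oplus>\<^sub>s Y"
    and Y_fill: "residue_class m (-g) \<subseteq> C \<oplus>\<^sub>s Y"
    and Y_essential: "\<And>f. f \<in> F \<Longrightarrow> \<exists>y\<in>Y. \<forall>f'\<in>F - {f}. f + y - f' \<notin> Y"
begin

abbreviation "K \<equiv> length chains"

definition filler :: "nat \<Rightarrow> int set" where
  "filler k = (if k < K then snd (chains ! k) else Y)"

definition witness :: "int set" where
  "witness = {x. x mod m \<notin> used_residues g K}
    \<union> (\<Union>k\<le>K. (+) (slot g k + g) ` filler k)
    \<union> (\<lambda>k. slot g k + g) ` {..<K}"

lemma shifted_filler_in_witness: "k \<le> K \<Longrightarrow> v \<in> filler k \<Longrightarrow> slot g k + g + v \<in> witness"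
  by (auto simp: witness_def)

lemma shifted_slot_in_witness: "k < K \<Longrightarrow> slot g k + g \<in> witness"
  by (simp add: witness_def)

lemma slot_bounds: "k \<le> K \<Longrightarrow> 0 \<le> slot g k \<and> slot g k + g < m"
  using slot_nonneg[OF g_pos] slot_strict_mono[OF g_pos, of k K] slots_fit
  by (cases "k = K") auto

lemma mod_eq_slot:
  assumes "k \<le> K" shows "x mod m = slot g k \<longleftrightarrow> x \<in> residue_class m (slot g k)"
  using slot_bounds[OF assms] g_pos by (intro mod_eq_iff_residue_class) auto

lemma mod_eq_shifted_slot:
  assumes "k \<le> K" shows "x mod m = slot g k + g \<longleftrightarrow> x \<in> residue_class m (slot g k + g)"
  using slot_bounds[OF assms] g_pos by (intro mod_eq_iff_residue_class) auto

lemma shifted_slot_mod: "k \<le> K \<Longrightarrow> (slot g k + g) mod m = slot g k + g"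
  using slot_bounds[of k] g_pos by (simp add: mod_pos_pos_trivial)

lemma complement_nth:
  assumes "k < K" shows "multZ m - fst (chains ! k) = F \<oplus>\<^sub>s filler k"
proof -
  have "chains ! k \<in> set chains" using assms by simp
  then show ?thesis
    using chain_complement[of "fst (chains ! k)" "snd (chains ! k)"] assms
    by (simp add: filler_def)
qed

lemma filler_class:
  assumes "k \<le> K" shows "filler k \<subseteq> residue_class m (-g)"
proof (cases "k < K")
  case True
  obtain f where f: "f \<in> F" using F_nonempty by blast
  show ?thesis
  proof
    fix v assume "v \<in> filler k"
    then have "f + v \<in> F \<oplus>\<^sub>s filler k" using f by (auto simp: mem_sumset)
    then have "f + v \<in> multZ m" unfolding complement_nth[OF True, symmetric] by blast
    then have "(f + v) - f \<in> residue_class m (0 - g)"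
      using residue_class_diff[of "f + v" m 0 f g] f F_class by auto
    then show "v \<in> residue_class m (-g)" by simp
  qed
qed (use Y_class in \<open>simp add: filler_def\<close>)

lemma filler_complement:
  assumes "k \<le> K" "x \<in> multZ m"
  shows "(k < K \<and> x \<in> fst (chains ! k)) \<or> x \<in> F \<oplus>\<^sub>s filler k"
proof (cases "k < K")
  case True
  show ?thesis
  proof (cases "x \<in> fst (chains ! k)")
    case False
    then have "x \<in> multZ m - fst (chains ! k)" using assms(2) by simp
    then show ?thesis unfolding complement_nth[OF True] by simp
  qed (simp add: True)
next
  case False
  have "x \<in> F \<oplus>\<^sub>s Y" using assms(2) Y_complement ..
  then show ?thesis using False by (simp add: filler_def)
qed

lemma filler_fill:
  assumes "k \<le> K"
  shows "residue_class m (-g) \<subseteq> C \<oplus>\<^sub>s filler k \<or> (slot g k - g) mod m \<notin> used_residues g K"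
  using assms chain_fill[of k] Y_fill by (cases "k < K") (simp_all add: filler_def)

lemma shifted_filler_mod:
  assumes "k \<le> K" "v \<in> filler k"
  shows "(slot g k + g + v) mod m = slot g k"
proof -
  have "v \<in> residue_class m (-g)" using filler_class[OF assms(1)] assms(2) ..
  then have "slot g k + g + v \<in> residue_class m (slot g k + g + - g)"
    by (intro residue_class_add) auto
  then show ?thesis using mod_eq_slot[OF assms(1)] by simp
qed

lemma witness_cases:
  assumes "x \<in> witness"
  obtains "x mod m \<notin> used_residues g K"
    | j v where "j \<le> K" "v \<in> filler j" "x = slot g j + g + v"
    | j where "j < K" "x = slot g j + g"
  using assms unfolding witness_def by blast

lemma witness_low_residue:
  assumes k: "k \<le> K" and x: "x \<in> witness" "x mod m = slot g k"
  shows "x - (slot g k + g) \<in> filler k"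
proof -
  have "slot g k \<in> used_residues g K" using k by (auto simp: used_residues_def)
  moreover have "x \<noteq> slot g j + g" if "j < K" for j
  proof
    assume "x = slot g j + g"
    then have "x mod m = slot g j + g"
      using shifted_slot_mod[of j] that by simp
    then show False using x(2) slot_ne_shifted_slot[OF g_pos, of k j] by simp
  qed
  ultimately obtain j v where j: "j \<le> K" "v \<in> filler j" "x = slot g j + g + v"
    using x by (metis witness_cases)
  then have "slot g j = slot g k" using x(2) shifted_filler_mod by simp
  then show ?thesis using j slot_eq_iff[OF g_pos] by simp
qed

lemma witness_high_residue:
  assumes k: "k \<le> K" and x: "x \<in> witness" "x mod m = slot g k + g"
  shows "k < K \<and> x = slot g k + g"
proof -
  have "slot g k + g \<in> used_residues g K" using k by (auto simp: used_residues_def)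
  moreover have "x \<noteq> slot g j + g + v" if "j \<le> K" "v \<in> filler j" for j v
    using x(2) shifted_filler_mod[OF that] slot_ne_shifted_slot[OF g_pos, of j k] by auto
  ultimately obtain j where j: "j < K" "x = slot g j + g"
    using x by (metis witness_cases)
  then have "slot g j = slot g k"
    using x(2) shifted_slot_mod[of j] by simp
  then show ?thesis using j slot_eq_iff[OF g_pos] by simp
qed

lemma witness_covers_low_residue:
  assumes k: "k \<le> K" and z: "z mod m = slot g k"
  shows "\<exists>c\<in>C \<union> F. \<exists>w\<in>witness. z = c + w"
  using filler_fill[OF k]
proof
  assume fill: "residue_class m (-g) \<subseteq> C \<oplus>\<^sub>s filler k"
  have "z - (slot g k + g) \<in> residue_class m (slot g k - (slot g k + g))"
    using z mod_eq_slot[OF k] by (intro residue_class_diff) auto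
  then have "z - (slot g k + g) \<in> C \<oplus>\<^sub>s filler k" using fill by auto
  then obtain c v where "c \<in> C" "v \<in> filler k" "z - (slot g k + g) = c + v"
    by (auto simp: mem_sumset)
  moreover have "slot g k + g + v \<in> witness"
    using shifted_filler_in_witness[OF k \<open>v \<in> filler k\<close>] .
  ultimately show ?thesis by (intro bexI[of _ c] bexI[of _ "slot g k + g + v"]) auto
next
  assume free: "(slot g k - g) mod m \<notin> used_residues g K"
  obtain f where f: "f \<in> F" using F_nonempty by blast
  have "z - f \<in> residue_class m (slot g k - g)"
    using z mod_eq_slot[OF k] f F_class by (intro residue_class_diff) auto
  then have "(z - f) mod m = (slot g k - g) mod m" by (simp add: mod_eq_dvd_iff)
  then have "z - f \<in> witness" using free by (simp add: witness_def)
  then show ?thesis using f by (intro bexI[of _ f] bexI[of _ "z - f"]) auto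
qed

lemma witness_covers_high_residue:
  assumes k: "k \<le> K" and z: "z mod m = slot g k + g"
  shows "\<exists>c\<in>C \<union> F. \<exists>w\<in>witness. z = c + w"
proof -
  have "z - (slot g k + g) \<in> multZ m"
    using z mod_eq_shifted_slot[OF k] by simp
  from filler_complement[OF k this] show ?thesis
  proof
    assume k': "k < K \<and> z - (slot g k + g) \<in> fst (chains ! k)"
    then have "z - (slot g k + g) \<in> C"
      using chain_subset[of "fst (chains ! k)" "snd (chains ! k)"] by auto
    with shifted_slot_in_witness[of k] k' show ?thesis
      by (intro bexI[of _ "z - (slot g k + g)"] bexI[of _ "slot g k + g"]) auto
  next
    assume "z - (slot g k + g) \<in> F \<oplus>\<^sub>s filler k"
    then obtain f v where "f \<in> F" "v \<in> filler k" "z - (slot g k + g) = f + v"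
      by (auto simp: mem_sumset)
    with shifted_filler_in_witness[OF k] show ?thesis
      by (intro bexI[of _ f] bexI[of _ "slot g k + g + v"]) auto
  qed
qed

lemma witness_covers: "\<exists>c\<in>C \<union> F. \<exists>w\<in>witness. z = c + w"
proof -
  consider "z mod m \<notin> used_residues g K"
    | k where "k \<le> K" "z mod m = slot g k"
    | k where "k \<le> K" "z mod m = slot g k + g"
    by (auto simp: used_residues_def)
  then show ?thesis
  proof cases
    case 1
    then have "z \<in> witness" by (simp add: witness_def)
    then show ?thesis using zero_in_C by force
  qed (use witness_covers_low_residue witness_covers_high_residue in auto)
qed

lemma witness_essential_C:
  assumes c: "c \<in> C"
  shows "\<exists>w\<in>witness. \<forall>c'\<in>(C \<union> F) - {c}. c + w - c' \<notin> witness"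
proof -
  from chains_cover c obtain S V where "(S, V) \<in> set chains" "c \<in> S" by blast
  then obtain k where k: "k < K" "c \<in> fst (chains ! k)" by (auto simp: in_set_conv_nth)
  have "m dvd c" using C_multiples c by auto
  have "c + (slot g k + g) - c' \<notin> witness" if c': "c' \<in> (C \<union> F) - {c}" for c'
  proof
    assume x: "c + (slot g k + g) - c' \<in> witness"
    show False
    proof (cases "c' \<in> C")
      case True
      then have "m dvd c - c'" using C_multiples \<open>m dvd c\<close> by auto
      then have "(c + (slot g k + g) - c') mod m = slot g k + g"
        using mod_eq_shifted_slot[of k] k(1) by simp
      then show False using witness_high_residue[OF less_imp_le[OF k(1)] x] c' by simp
    next
      case False
      then have "c' \<in> F" using c' by simp
      then have "m dvd c' - g" using F_class by auto
      then have "m dvd c - (c' - g)" using \<open>m dvd c\<close> by (rule dvd_diff[rotated])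
      then have "(c + (slot g k + g) - c') mod m = slot g k"
        using mod_eq_slot[of k] k(1) by (simp add: algebra_simps)
      then have "c - c' \<in> filler k"
        using witness_low_residue[OF less_imp_le[OF k(1)] x] by simp
      then have "c \<in> F \<oplus>\<^sub>s filler k"
        using \<open>c' \<in> F\<close> by (force simp: mem_sumset)
      then show False using complement_nth[OF k(1)] k(2) by blast
    qed
  qed
  with shifted_slot_in_witness[OF k(1)] show ?thesis by blast
qed

lemma witness_essential_F:
  assumes f: "f \<in> F"
  shows "\<exists>w\<in>witness. \<forall>c'\<in>(C \<union> F) - {f}. f + w - c' \<notin> witness"
proof -
  obtain y where y: "y \<in> Y" "\<forall>f'\<in>F - {f}. f + y - f' \<notin> Y"
    using Y_essential[OF f] by blast
  have "m dvd f - g" "m dvd y + g" using f F_class y(1) Y_class by auto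
  then have "m dvd (f - g) + (y + g)" by (rule dvd_add)
  then have fy: "m dvd f + y" by simp
  have "f + (slot g K + g + y) - c' \<notin> witness" if c': "c' \<in> (C \<union> F) - {f}" for c'
  proof
    assume x: "f + (slot g K + g + y) - c' \<in> witness"
    show False
    proof (cases "c' \<in> C")
      case True
      then have "m dvd (f + y) - c'" using C_multiples fy by auto
      then have "(f + (slot g K + g + y) - c') mod m = slot g K + g"
        using mod_eq_shifted_slot[of K] by (simp add: algebra_simps)
      then show False using witness_high_residue[OF order_refl x] by simp
    next
      case False
      then have "c' \<in> F" "c' \<noteq> f" using c' by auto
      then have "m dvd c' - g" using F_class by auto
      then have "m dvd (f + y) - (c' - g)" using fy by (rule dvd_diff[rotated])
      then have "(f + (slot g K + g + y) - c') mod m = slot g K"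
        using mod_eq_slot[of K] by (simp add: algebra_simps)
      then have "f + y - c' \<in> Y"
        using witness_low_residue[OF order_refl x] by (simp add: filler_def algebra_simps)
      then show False using y(2) \<open>c' \<in> F\<close> \<open>c' \<noteq> f\<close> by auto
    qed
  qed
  moreover have "slot g K + g + y \<in> witness"
    using shifted_filler_in_witness[of K y] y(1) by (simp add: filler_def)
  ultimately show ?thesis by blast
qed

theorem arises_as_MAC: "arises_as_MAC (C \<union> F)"
proof (rule arises_as_MACI)
  show "\<exists>c\<in>C \<union> F. \<exists>w\<in>witness. z = c + w" for z by (rule witness_covers)
  show "\<exists>w\<in>witness. \<forall>c'\<in>(C \<union> F) - {c}. c + w - c' \<notin> witness" if "c \<in> C \<union> F" for c
    using that witness_essential_C witness_essential_F by blast
qed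

end

section \<open>Modifying the chains of a cover\<close>

lemma complement_Int_shift_closed:
  assumes SV: "multZ m - S = F \<oplus>\<^sub>s V" and F: "F \<subseteq> residue_class m g" "f0 \<in> F"
    and H: "\<And>f x. f \<in> F \<Longrightarrow> x \<notin> H \<Longrightarrow> x + (f - f0) \<notin> H"
  shows "multZ m - (S \<inter> H) = F \<oplus>\<^sub>s (V \<union> (\<lambda>x. x - f0) ` (multZ m - H))"
proof (intro equalityI subsetI)
  fix x assume x: "x \<in> multZ m - (S \<inter> H)"
  show "x \<in> F \<oplus>\<^sub>s (V \<union> (\<lambda>x. x - f0) ` (multZ m - H))"
  proof (cases "x \<in> S")
    case True
    then have "x - f0 \<in> (\<lambda>x. x - f0) ` (multZ m - H)" using x by auto
    then show ?thesis using F(2) by (force simp: mem_sumset)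
  next
    case False
    then have "x \<in> F \<oplus>\<^sub>s V" using x SV by blast
    then show ?thesis by (auto simp: mem_sumset)
  qed
next
  fix x assume "x \<in> F \<oplus>\<^sub>s (V \<union> (\<lambda>x. x - f0) ` (multZ m - H))"
  then obtain f v where f: "f \<in> F" and v: "v \<in> V \<union> (\<lambda>x. x - f0) ` (multZ m - H)"
    and x: "x = f + v"
    by (auto simp: mem_sumset)
  show "x \<in> multZ m - (S \<inter> H)"
  proof (cases "v \<in> V")
    case True
    then have "x \<in> F \<oplus>\<^sub>s V" using f x by (auto simp: mem_sumset)
    then show ?thesis using SV by blast
  next
    case False
    then obtain y where y: "y \<in> multZ m" "y \<notin> H" "v = y - f0" using v by blast
    have "f - f0 \<in> residue_class m (g - g)" using F f by (intro residue_class_diff) auto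
    then have "m dvd y + (f - f0)" using y(1) by simp
    moreover have "x = y + (f - f0)" using x y(3) by simp
    ultimately show ?thesis using H[OF f y(2)] by simp
  qed
qed

lemma residue_class_subset_sumset_if_gaps:
  assumes m: "0 < m" and C: "multN m \<subseteq> C" and F: "finite F" "F \<subseteq> residue_class m g"
    and SV: "multZ m - S = F \<oplus>\<^sub>s V" and gaps: "\<And>a. \<exists>x\<in>multZ m. x \<le> a \<and> x \<notin> S"
  shows "residue_class m (-g) \<subseteq> C \<oplus>\<^sub>s V"
proof (rule residue_class_subset_sumset_if_unbounded_below[OF m C])
  fix t
  obtain x where x: "x \<in> multZ m" "x \<le> t + Min F" "x \<notin> S" using gaps by blast
  then have "x \<in> F \<oplus>\<^sub>s V" using SV by blast
  then obtain f v where fv: "f \<in> F" "v \<in> V" "x = f + v" by (auto simp: mem_sumset)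
  have "Min F \<le> f" using F(1) fv(1) by simp
  moreover have "v \<in> residue_class m (0 - g)"
    using residue_class_diff[of x m 0 f g] x(1) fv F(2) by auto
  ultimately show "\<exists>v\<in>V \<inter> residue_class m (-g). v \<le> t"
    using fv x(2) by (intro bexI[of _ v]) auto
qed

locale chain_cover =
  fixes m g :: int and F C :: "int set" and n :: nat and S W :: "nat \<Rightarrow> int set"
  assumes g_pos: "0 < g"
    and F_finite: "finite F" and F_nonempty: "F \<noteq> {}"
    and F_class: "F \<subseteq> residue_class m g"
    and C_bounds: "multN m \<subseteq> C" "C \<subseteq> multZ m"
    and chains_union: "(\<Union>i\<in>{1..n}. S i) = C"
    and chain_complement: "\<And>i. i \<in> {1..n} \<Longrightarrow> multZ m - S i = F \<oplus>\<^sub>s W i"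
    and slots_fit: "slot g (Suc n) + g \<le> m"
begin

definition is_chain :: "int set \<times> int set \<Rightarrow> bool" where
  "is_chain c \<longleftrightarrow> fst c \<subseteq> C \<and> multZ m - fst c = F \<oplus>\<^sub>s snd c"

definition fills :: "int set \<Rightarrow> bool" where
  "fills V \<longleftrightarrow> residue_class m (-g) \<subseteq> C \<oplus>\<^sub>s V"

lemma m_pos: "0 < m"
  using slots_fit slot_nonneg[OF g_pos, of "Suc n"] g_pos by linarith

lemma is_chain_member: "i \<in> {1..n} \<Longrightarrow> is_chain (S i, W i)"
  using chains_union chain_complement by (auto simp: is_chain_def)

lemma MAC_of_chains:
  assumes fit: "slot g (length cs) + g < m"
    and chains: "\<And>c. c \<in> set cs \<Longrightarrow> is_chain c"
    and cover: "C \<subseteq> (\<Union>c\<in>set cs. fst c)"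
    and fill: "\<And>k. k < length cs \<Longrightarrow>
      fills (snd (cs ! k)) \<or> (slot g k - g) mod m \<notin> used_residues g (length cs)"
  shows "arises_as_MAC (C \<union> F)"
proof -
  obtain Y where Y: "Y \<subseteq> residue_class m (-g)" "multZ m \<subseteq> F \<oplus>\<^sub>s Y" "\<And>t. \<exists>y\<in>Y. y \<le> t"
    "\<And>f. f \<in> F \<Longrightarrow> \<exists>y\<in>Y. \<forall>f'\<in>F - {f}. f + y - f' \<notin> Y"
    using essential_complement_in_class[OF m_pos F_finite F_nonempty F_class] by blast
  have "residue_class m (-g) \<subseteq> C \<oplus>\<^sub>s Y"
    using Y(1,3)
    by (intro residue_class_subset_sumset_if_unbounded_below[OF m_pos C_bounds(1)]) blast
  moreover have "0 \<in> C" using C_bounds(1) m_pos by (auto simp: mem_multN)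
  ultimately interpret MAC_layout m g F C Y cs
  proof unfold_locales
    show "S \<subseteq> C" "multZ m - S = F \<oplus>\<^sub>s V" if "(S, V) \<in> set cs" for S V
      using chains[OF that] by (simp_all add: is_chain_def)
    show "C \<subseteq> (\<Union>(S, V)\<in>set cs. S)" using cover by (auto simp: case_prod_beta)
  qed (use g_pos fit F_class F_nonempty C_bounds(2) fill Y in \<open>auto simp: fills_def\<close>)
  show ?thesis by (rule arises_as_MAC)
qed

lemma MAC_if_gaps:
  assumes gaps: "\<And>i a. i \<in> {1..n} \<Longrightarrow> \<exists>x\<in>multZ m. x \<le> a \<and> x \<notin> S i"
  shows "arises_as_MAC (C \<union> F)"
proof (rule MAC_of_chains)
  let ?cs = "map (\<lambda>i. (S i, W i)) [1..<Suc n]"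
  have set_cs: "set ?cs = (\<lambda>i. (S i, W i)) ` {1..n}"
    by (simp del: upt_Suc add: atLeastLessThanSuc_atLeastAtMost)
  have len: "length ?cs = n" by simp
  show "slot g (length ?cs) + g < m"
    unfolding len using slot_strict_mono[OF g_pos, of n "Suc n"] slots_fit by simp
  show "is_chain c" if "c \<in> set ?cs" for c
    using that is_chain_member unfolding set_cs by blast
  show "C \<subseteq> (\<Union>c\<in>set ?cs. fst c)"
    unfolding set_cs chains_union [symmetric] by force
  show "fills (snd (?cs ! k)) \<or> (slot g k - g) mod m \<notin> used_residues g (length ?cs)"
    if "k < length ?cs" for k
  proof -
    have i: "Suc k \<in> {1..n}" using that len by simp
    have "?cs ! k = (S (Suc k), W (Suc k))" using that len by (simp del: upt_Suc)
    moreover have "fills (W (Suc k))"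
      using residue_class_subset_sumset_if_gaps[OF m_pos C_bounds(1) F_finite F_class
          chain_complement[OF i] gaps[OF i]]
      by (simp add: fills_def)
    ultimately show ?thesis by simp
  qed
qed

definition upper_chain :: "int \<Rightarrow> nat \<Rightarrow> int set \<times> int set" where
  "upper_chain a i = (S i \<inter> {a<..}, W i \<union> (\<lambda>x. x - Max F) ` (multZ m - {a<..}))"

definition lower_chain :: "int \<Rightarrow> nat \<Rightarrow> int set \<times> int set" where
  "lower_chain a i = (S i \<inter> {..a}, W i \<union> (\<lambda>x. x - Min F) ` (multZ m - {..a}))"

lemma upper_chain_is_chain:
  assumes i: "i \<in> {1..n}" shows "is_chain (upper_chain a i)"
proof -
  have Max: "Max F \<in> F" using F_finite F_nonempty by simp
  have "S i \<subseteq> C" using chains_union i by blast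
  moreover have "multZ m - (S i \<inter> {a<..}) = F \<oplus>\<^sub>s (W i \<union> (\<lambda>x. x - Max F) ` (multZ m - {a<..}))"
  proof (rule complement_Int_shift_closed[OF chain_complement[OF i] F_class Max])
    show "x + (f - Max F) \<notin> {a<..}" if "f \<in> F" "x \<notin> {a<..}" for f x
      using that Max_ge[OF F_finite, of f] by simp
  qed
  ultimately show ?thesis by (simp add: is_chain_def upper_chain_def le_infI1)
qed

lemma upper_chain_fills: "fills (snd (upper_chain a i))"
  unfolding fills_def
proof (rule residue_class_subset_sumset_if_unbounded_below[OF m_pos C_bounds(1)])
  fix t
  obtain x where x: "x \<in> residue_class m 0" "x \<le> min a (t + Max F)"
    using residue_class_unbounded_below[OF m_pos] by blast
  have "Max F \<in> F" using F_finite F_nonempty by simp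
  then have "x - Max F \<in> residue_class m (0 - g)"
    using x(1) F_class by (intro residue_class_diff) auto
  moreover have "x - Max F \<in> snd (upper_chain a i)"
    using x by (auto simp: upper_chain_def)
  ultimately show "\<exists>v\<in>snd (upper_chain a i) \<inter> residue_class m (-g). v \<le> t"
    using x(2) by (intro bexI[of _ "x - Max F"]) auto
qed

lemma lower_chain_is_chain:
  assumes i: "i \<in> {1..n}" shows "is_chain (lower_chain a i)"
proof -
  have Min: "Min F \<in> F" using F_finite F_nonempty by simp
  have "S i \<subseteq> C" using chains_union i by blast
  moreover have "multZ m - (S i \<inter> {..a}) = F \<oplus>\<^sub>s (W i \<union> (\<lambda>x. x - Min F) ` (multZ m - {..a}))"
  proof (rule complement_Int_shift_closed[OF chain_complement[OF i] F_class Min])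
    show "x + (f - Min F) \<notin> {..a}" if "f \<in> F" "x \<notin> {..a}" for f x
      using that Min_le[OF F_finite, of f] by simp
  qed
  ultimately show ?thesis by (simp add: is_chain_def lower_chain_def le_infI1)
qed

lemma lower_chain_fills:
  assumes ray: "{x \<in> multZ m. x \<le> a} \<subseteq> C" shows "fills (snd (lower_chain a i))"
  unfolding fills_def
proof (rule residue_class_subset_sumset_if_unbounded_above[OF ray])
  fix t
  obtain x where x: "x \<in> residue_class m 0" "max (a + 1) (t + Min F) \<le> x"
    using residue_class_unbounded_above[OF m_pos] by blast
  have "Min F \<in> F" using F_finite F_nonempty by simp
  then have "x - Min F \<in> residue_class m (0 - g)"
    using x(1) F_class by (intro residue_class_diff) auto
  moreover have "x - Min F \<in> snd (lower_chain a i)"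
    using x by (auto simp: lower_chain_def)
  ultimately show "\<exists>v\<in>snd (lower_chain a i) \<inter> residue_class m (-g). t \<le> v"
    using x(2) by (intro bexI[of _ "x - Min F"]) auto
qed

lemma MAC_if_down_ray_slack:
  assumes i0: "i0 \<in> {1..n}" and ray: "{x \<in> multZ m. x \<le> a} \<subseteq> S i0"
    and slack: "slot g (Suc n) + g < m"
  shows "arises_as_MAC (C \<union> F)"
proof (rule MAC_of_chains)
  let ?cs = "lower_chain a i0 # map (upper_chain a) [1..<Suc n]"
  have ray_C: "{x \<in> multZ m. x \<le> a} \<subseteq> C" using ray i0 chains_union by blast
  have set_cs: "set ?cs = insert (lower_chain a i0) (upper_chain a ` {1..n})"
    by (simp del: upt_Suc add: atLeastLessThanSuc_atLeastAtMost)
  show "slot g (length ?cs) + g < m" using slack by (simp del: upt_Suc)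
  show "is_chain c" if "c \<in> set ?cs" for c
    using that lower_chain_is_chain[OF i0] upper_chain_is_chain unfolding set_cs by blast
  show "C \<subseteq> (\<Union>c\<in>set ?cs. fst c)"
  proof
    fix x assume x: "x \<in> C"
    then obtain j where j: "j \<in> {1..n}" "x \<in> S j" using chains_union by blast
    have "x \<in> multZ m" using x C_bounds(2) ..
    then have "x \<in> fst (lower_chain a i0)" if "x \<le> a"
      using that ray by (auto simp: lower_chain_def)
    moreover have "x \<in> fst (upper_chain a j)" if "a < x"
      using that j by (simp add: upper_chain_def)
    ultimately show "x \<in> (\<Union>c\<in>set ?cs. fst c)" using j(1) unfolding set_cs by force
  qed
  have "fills (snd c)" if "c \<in> set ?cs" for c
    using that lower_chain_fills[OF ray_C] upper_chain_fills unfolding set_cs by blast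
  then show "fills (snd (?cs ! k)) \<or> (slot g k - g) mod m \<notin> used_residues g (length ?cs)"
    if "k < length ?cs" for k
    using nth_mem[OF that] by blast
qed

lemma shifted_zero_slot_unused:
  assumes tight: "m = slot g (Suc n) + g"
  shows "(slot g 0 - g) mod m \<notin> used_residues g n"
proof -
  have "(slot g 0 - g) mod m = (- g + m) mod m" by (simp add: slot_def)
  also have "\<dots> = (m - g) mod m" by simp
  also have "\<dots> = slot g (Suc n)"
    using tight slot_nonneg[OF g_pos, of "Suc n"] g_pos by (simp add: mod_pos_pos_trivial)
  finally have eq: "(slot g 0 - g) mod m = slot g (Suc n)" .
  have "slot g (Suc n) \<noteq> slot g j" if "j \<le> n" for j
    using slot_strict_mono[OF g_pos, of j "Suc n"] that by simp
  then have "slot g (Suc n) \<notin> used_residues g n"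
    by (auto simp: used_residues_def slot_ne_shifted_slot[OF g_pos])
  then show ?thesis unfolding eq .
qed

lemma MAC_if_down_ray_tight:
  assumes i0: "i0 \<in> {1..n}" and ray: "{x \<in> multZ m. x \<le> a} \<subseteq> S i0"
    and tight: "m = slot g (Suc n) + g"
  shows "arises_as_MAC (C \<union> F)"
proof (rule MAC_of_chains)
  let ?rest = "map (upper_chain a) (remove1 i0 [1..<Suc n])"
  let ?cs = "(S i0, W i0) # ?rest"
  have set_rest: "set ?rest = upper_chain a ` ({1..n} - {i0})"
    by (simp del: upt_Suc add: set_remove1_eq atLeastLessThanSuc_atLeastAtMost)
  have len: "length ?cs = n" using i0 by (simp del: upt_Suc add: length_remove1)
  show "slot g (length ?cs) + g < m"
    unfolding len using tight slot_strict_mono[OF g_pos, of n "Suc n"] by simp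
  show "is_chain c" if "c \<in> set ?cs" for c
    using that is_chain_member[OF i0] upper_chain_is_chain set_rest by auto
  show "C \<subseteq> (\<Union>c\<in>set ?cs. fst c)"
  proof
    fix x assume x: "x \<in> C"
    then obtain j where j: "j \<in> {1..n}" "x \<in> S j" using chains_union by blast
    have "x \<in> multZ m" using x C_bounds(2) ..
    then have "x \<in> S i0" if "x \<le> a \<or> j = i0"
      using that j ray by auto
    moreover have "x \<in> fst (upper_chain a j)" if "a < x"
      using that j by (simp add: upper_chain_def)
    ultimately show "x \<in> (\<Union>c\<in>set ?cs. fst c)" using j(1) set_rest by force
  qed
  show "fills (snd (?cs ! k)) \<or> (slot g k - g) mod m \<notin> used_residues g (length ?cs)"
    if "k < length ?cs" for k
  proof (cases k)
    case 0
    then show ?thesis unfolding len using shifted_zero_slot_unused[OF tight] by simp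
  next
    case (Suc l)
    then have "?cs ! k \<in> upper_chain a ` ({1..n} - {i0})"
      using that nth_mem[of l ?rest] set_rest by simp
    then show ?thesis using upper_chain_fills by auto
  qed
qed

lemma MAC_if_down_ray:
  assumes "i0 \<in> {1..n}" "{x \<in> multZ m. x \<le> a} \<subseteq> S i0"
  shows "arises_as_MAC (C \<union> F)"
proof (cases "slot g (Suc n) + g < m")
  case True
  then show ?thesis by (rule MAC_if_down_ray_slack[OF assms])
next
  case False
  then have "m = slot g (Suc n) + g" using slots_fit by simp
  then show ?thesis by (rule MAC_if_down_ray_tight[OF assms])
qed

end

theorem theorem8:
  fixes m ft :: int and B F :: "int set" and n :: nat and S :: "nat \<Rightarrow> int set"
  assumes "m \<ge> 2"
    and "B \<subseteq> multZ m" and "infinite B"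
    and "finite F" and "F \<noteq> {}"
    and "1 \<le> ft" and "ft \<le> m - 1"
    and "\<forall>x\<in>F. x mod m = ft"
    and "n \<ge> 1"
    and "(\<Union>i\<in>{1..n}. S i) = multN m \<union> B"
    and "\<forall>i\<in>{1..n}. \<exists>W. multZ m - S i = F \<oplus>\<^sub>s W"
    and "m \<ge> ft + 2 * ft * ((int n + 1) div ft) + (int n + 1) mod ft"
  shows "arises_as_MAC (multN m \<union> B \<union> F)"
proof -
  obtain W where W: "\<And>i. i \<in> {1..n} \<Longrightarrow> multZ m - S i = F \<oplus>\<^sub>s W i"
    using assms(11) by metis
  have F_class: "F \<subseteq> residue_class m ft"
    using assms(6-8) by (auto simp: mod_eq_dvd_iff [symmetric] mod_pos_pos_trivial)
  have "multN m \<subseteq> multZ m" by (auto simp: multN_def)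
  then interpret chain_cover m ft F "multN m \<union> B" n S W
    using assms(2,4,5,6,10,12) F_class W by unfold_locales (auto simp: slot_def add.commute)
  show ?thesis
  proof (cases "\<exists>i\<in>{1..n}. \<exists>a. {x \<in> multZ m. x \<le> a} \<subseteq> S i")
    case True
    then show ?thesis using MAC_if_down_ray by blast
  next
    case False
    then show ?thesis using MAC_if_gaps by blast
  qed
qed

end
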